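(* Let $k$ be a positive integer and $c > 0$. In any election, a committee $S$ of size $k$ is $c$-stable if and only if it is $\frac{c}{k}$-undominated.
   Context: An election consists of a finite set $V$ of $n$ voters, a finite set $C$ of candidates, and for each voter $v$ a strict linear order $\succ_v$ on $C$. A committee is a nonempty subset $S \subseteq C$. Voter $v$ strongly prefers committee $S'$ over committee $S$ (written $S' \succ_v S$) if $v$ prefers her favorite candidate in $S'$ over her favorite candidate in $S$; for a single candidate $a$, $a \succ_v S$ means $\{a\} \succ_v S$, i.e., $v$ prefers $a$ to every member of $S$. A committee $S$ of size $k$ is $c$-stable if for every committee $S'$ of size $k'$, the fraction of voters $v$ with $S' \succ_v S$ is less than $c \cdot \frac{k'}{k}$. A committee $S$ is $\alpha$-undominated if for every candidate $a \in C$, the fraction of voters $v$ with $a \succ_v S$ is less than $\alpha$. *)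

theory Defs
  imports Complex_Main
begin

text \<open>An election: finite nonempty voter set V, finite candidate set C, and for each
voter v a strict linear order P v on C, where (a,b) \<in> P v means v prefers a to b.\<close>

definition election :: "'v set \<Rightarrow> 'c set \<Rightarrow> ('v \<Rightarrow> ('c \<times> 'c) set) \<Rightarrow> bool" where
  "election V C P \<longleftrightarrow> finite V \<and> V \<noteq> {} \<and> finite C \<and>
     (\<forall>v\<in>V. P v \<subseteq> C \<times> C \<and> strict_linear_order_on C (P v))"

definition committee :: "'c set \<Rightarrow> 'c set \<Rightarrow> bool" where
  "committee C S \<longleftrightarrow> S \<noteq> {} \<and> S \<subseteq> C"

definition favorite :: "('c \<times> 'c) set \<Rightarrow> 'c set \<Rightarrow> 'c" where
  "favorite r S = (THE a. a \<in> S \<and> (\<forall>b\<in>S. b \<noteq> a \<longrightarrow> (a, b) \<in> r))"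

definition strongly_prefers :: "('c \<times> 'c) set \<Rightarrow> 'c set \<Rightarrow> 'c set \<Rightarrow> bool" where
  "strongly_prefers r S' S \<longleftrightarrow> (favorite r S', favorite r S) \<in> r"

definition frac_prefer :: "'v set \<Rightarrow> ('v \<Rightarrow> ('c \<times> 'c) set) \<Rightarrow> 'c set \<Rightarrow> 'c set \<Rightarrow> real" where
  "frac_prefer V P S' S = real (card {v \<in> V. strongly_prefers (P v) S' S}) / real (card V)"

definition c_stable :: "'v set \<Rightarrow> 'c set \<Rightarrow> ('v \<Rightarrow> ('c \<times> 'c) set) \<Rightarrow> real \<Rightarrow> 'c set \<Rightarrow> bool" where
  "c_stable V C P c S \<longleftrightarrow>
     (\<forall>S'. committee C S' \<longrightarrow> frac_prefer V P S' S < c * real (card S') / real (card S))"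

definition undominated :: "'v set \<Rightarrow> 'c set \<Rightarrow> ('v \<Rightarrow> ('c \<times> 'c) set) \<Rightarrow> real \<Rightarrow> 'c set \<Rightarrow> bool" where
  "undominated V C P \<alpha> S \<longleftrightarrow> (\<forall>a\<in>C. frac_prefer V P {a} S < \<alpha>)"

end

theory Submission
  imports Defs
begin

text \<open>
  Testing stability against singleton committees \<open>{a}\<close>, which have size 1, is exactly
  \<open>c/k\<close>-undominatedness. Conversely, a voter who prefers a committee \<open>S'\<close> to \<open>S\<close> prefers
  her favourite member of \<open>S'\<close> to \<open>S\<close>; so by the union bound the fraction of such voters
  is at most the sum over \<open>a \<in> S'\<close> of the fractions preferring \<open>a\<close> to \<open>S\<close>, each below
  \<open>c/k\<close>, which gives less than \<open>c |S'| / k\<close>.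
\<close>

lemma strict_linear_order_on_obtains_top:
  assumes "strict_linear_order_on C r" and "finite S" "S \<noteq> {}" "S \<subseteq> C"
  obtains a where "a \<in> S" "\<forall>b\<in>S. b \<noteq> a \<longrightarrow> (a, b) \<in> r"
proof -
  have "trans r" "irrefl r" "total_on C r"
    using assms(1) by (auto simp: strict_linear_order_on_def)
  let ?rS = "r \<inter> S \<times> S"
  have "trans ?rS"
    using \<open>trans r\<close> by (auto intro: transI dest: transD)
  have "wf ?rS"
  proof (rule finite_acyclic_wf)
    show "finite ?rS"
      using \<open>finite S\<close> by blast
    show "acyclic ?rS"
      using \<open>trans ?rS\<close> \<open>irrefl r\<close> by (simp add: acyclic_irrefl irrefl_def)
  qed
  from this \<open>S \<noteq> {}\<close> obtain a where "a \<in> S" and no_above: "\<And>y. (y, a) \<in> ?rS \<Longrightarrow> y \<notin> S"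
    by (rule wfE_min') blast
  have "(a, b) \<in> r" if "b \<in> S" "b \<noteq> a" for b
  proof -
    have "(b, a) \<notin> r"
      using no_above[of b] that(1) \<open>a \<in> S\<close> by blast
    with \<open>total_on C r\<close> show ?thesis
      using that \<open>a \<in> S\<close> \<open>S \<subseteq> C\<close> unfolding total_on_def by blast
  qed
  with \<open>a \<in> S\<close> show thesis
    using that by blast
qed

lemma favorite_eqI:
  assumes "asym r" and "a \<in> S" and "\<forall>b\<in>S. b \<noteq> a \<longrightarrow> (a, b) \<in> r"
  shows "favorite r S = a"
  unfolding favorite_def
proof (rule the_equality)
  show "a \<in> S \<and> (\<forall>b\<in>S. b \<noteq> a \<longrightarrow> (a, b) \<in> r)"
    using assms(2,3) by blast
next
  fix a' assume "a' \<in> S \<and> (\<forall>b\<in>S. b \<noteq> a' \<longrightarrow> (a', b) \<in> r)"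
  then show "a' = a"
    using assms by (metis asymD)
qed

lemma favorite_singleton [simp]: "favorite r {a} = a"
  unfolding favorite_def by (rule the_equality) auto

lemma favorite_in:
  assumes "strict_linear_order_on C r" and "finite S" "S \<noteq> {}" "S \<subseteq> C"
  shows "favorite r S \<in> S"
proof -
  have "asym r"
    using assms(1) by (auto simp: strict_linear_order_on_def asym_on_iff_irrefl_on_if_trans_on)
  obtain a where "a \<in> S" "\<forall>b\<in>S. b \<noteq> a \<longrightarrow> (a, b) \<in> r"
    using strict_linear_order_on_obtains_top[OF assms] .
  with \<open>asym r\<close> show ?thesis
    using favorite_eqI by metis
qed

lemma strongly_prefers_iff_favorite:
  "strongly_prefers r S' S \<longleftrightarrow> strongly_prefers r {favorite r S'} S"
  by (simp add: strongly_prefers_def)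

lemma frac_prefer_le_sum_singletons:
  assumes "election V C P" and "committee C S'"
  shows "frac_prefer V P S' S \<le> (\<Sum>a\<in>S'. frac_prefer V P {a} S)"
proof -
  have "finite V" "finite S'"
    using assms by (auto simp: election_def committee_def intro: finite_subset)
  let ?pref = "\<lambda>T. {v \<in> V. strongly_prefers (P v) T S}"
  have "?pref S' \<subseteq> (\<Union>a\<in>S'. ?pref {a})"
  proof
    fix v assume "v \<in> ?pref S'"
    moreover have "favorite (P v) S' \<in> S'"
      using calculation assms \<open>finite S'\<close>
      by (intro favorite_in[of C]) (auto simp: election_def committee_def)
    ultimately show "v \<in> (\<Union>a\<in>S'. ?pref {a})"
      using strongly_prefers_iff_favorite by blast
  qed
  moreover have "finite (\<Union>a\<in>S'. ?pref {a})"
    using \<open>finite V\<close> by (rule rev_finite_subset) blast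
  ultimately have "card (?pref S') \<le> card (\<Union>a\<in>S'. ?pref {a})"
    by (simp add: card_mono)
  also have "\<dots> \<le> (\<Sum>a\<in>S'. card (?pref {a}))"
    using \<open>finite S'\<close> by (rule card_UN_le)
  finally have "real (card (?pref S')) \<le> real (\<Sum>a\<in>S'. card (?pref {a}))"
    by (rule of_nat_mono)
  then show ?thesis
    unfolding frac_prefer_def sum_divide_distrib[symmetric] of_nat_sum
    by (rule divide_right_mono) simp
qed

theorem proposition1:
  fixes V :: "'v set" and C :: "'c set" and P :: "'v \<Rightarrow> ('c \<times> 'c) set"
    and k :: nat and c :: real and S :: "'c set"
  assumes "election V C P"
    and "k > 0" and "c > 0"
    and "committee C S" and "card S = k"
  shows "c_stable V C P c S \<longleftrightarrow> undominated V C P (c / real k) S"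
proof
  assume stable: "c_stable V C P c S"
  show "undominated V C P (c / real k) S"
    unfolding undominated_def
  proof
    fix a assume "a \<in> C"
    then have "committee C {a}"
      by (simp add: committee_def)
    then show "frac_prefer V P {a} S < c / real k"
      using stable assms(5) unfolding c_stable_def by fastforce
  qed
next
  assume undominated: "undominated V C P (c / real k) S"
  show "c_stable V C P c S"
    unfolding c_stable_def
  proof (intro allI impI)
    fix S' assume "committee C S'"
    then have "finite S'" "S' \<noteq> {}" "S' \<subseteq> C"
      using assms(1) by (auto simp: election_def committee_def intro: finite_subset)
    have "frac_prefer V P S' S \<le> (\<Sum>a\<in>S'. frac_prefer V P {a} S)"
      using assms(1) \<open>committee C S'\<close> by (rule frac_prefer_le_sum_singletons)
    also have "\<dots> < (\<Sum>a\<in>S'. c / real k)"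
      using \<open>finite S'\<close> \<open>S' \<noteq> {}\<close> \<open>S' \<subseteq> C\<close> undominated
      by (intro sum_strict_mono) (auto simp: undominated_def)
    finally show "frac_prefer V P S' S < c * real (card S') / real (card S)"
      using assms(5) by (simp add: mult.commute)
  qed
qed

end
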